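(* Fix $k\in\mathbb N$ and $a_1,\dots,a_k>0$. Then, as $N\to\infty$, $$N^{2/k}\Big[\min_{j=1}^N\Big(\sum_{i=1}^k a_i(\sqrt N\gamma_{ij})^2\Big)-\min_{j=1}^N\Big(\sum_{i=1}^k a_iw_{ij}^2\Big)\Big]\to0\quad\text{in probability}.$$
   Context: Let $\mathbf{y}_1,\dots,\mathbf{y}_N$ be i.i.d. $\mathcal N(0,\mathrm{Id}_N)$ vectors in $\mathbb R^N$. Gram–Schmidt: $\mathbf w_1=\mathbf y_1$, $\mathbf w_i=\mathbf y_i-\sum_{j<i}\frac{\langle\mathbf y_i,\mathbf w_j\rangle}{\|\mathbf w_j\|^2}\mathbf w_j$, with $w_{ij}$ the $j$-th entry of $\mathbf w_i$, and $\boldsymbol\gamma_i=\mathbf w_i/\|\mathbf w_i\|$ with $j$-th entry $\gamma_{ij}$. *)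

theory Defs
  imports "HOL-Probability.Probability"
begin

text \<open>Vectors in R^N are functions nat => real, coordinates indexed by 1..N.\<close>

definition ipN :: "nat \<Rightarrow> (nat \<Rightarrow> real) \<Rightarrow> (nat \<Rightarrow> real) \<Rightarrow> real" where
  "ipN N u v = (\<Sum>l\<in>{1..N}. u l * v l)"

text \<open>Gram-Schmidt: gs N y i is w_i, where y i is the i-th vector (entry l is y i l).\<close>
function gs :: "nat \<Rightarrow> (nat \<Rightarrow> nat \<Rightarrow> real) \<Rightarrow> nat \<Rightarrow> nat \<Rightarrow> real" where
  "gs N y i = (\<lambda>l. y i l - (\<Sum>j\<in>{1..<i}.
       (ipN N (y i) (gs N y j) / ipN N (gs N y j) (gs N y j)) * gs N y j l))"
  by auto
termination
  by (relation "Wellfounded.measure (\<lambda>(N, y, i). i)") auto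

definition gsn :: "nat \<Rightarrow> (nat \<Rightarrow> nat \<Rightarrow> real) \<Rightarrow> nat \<Rightarrow> nat \<Rightarrow> real" where
  "gsn N y i l = gs N y i l / sqrt (ipN N (gs N y i) (gs N y i))"

text \<open>Sample space for size N: N^2 i.i.d. standard Gaussians omega (i,l), i,l in 1..N;
  y_i has l-th entry omega (i,l).\<close>
definition gauss_space :: "nat \<Rightarrow> (nat \<times> nat \<Rightarrow> real) measure" where
  "gauss_space N = PiM ({1..N} \<times> {1..N}) (\<lambda>_. std_normal_distribution)"

definition yvec :: "(nat \<times> nat \<Rightarrow> real) \<Rightarrow> nat \<Rightarrow> nat \<Rightarrow> real" where
  "yvec \<omega> i l = \<omega> (i, l)"

end

theory Submission
  imports Defs "HOL-Real_Asymp.Real_Asymp"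
begin

text \<open>
  Write \<open>g j = \<Sum>i. a i * w_ij^2\<close> and \<open>f j = \<Sum>i. a i * (sqrt N * gamma_ij)^2
  = \<Sum>i. a i * (N / |w_i|^2) * w_ij^2\<close>. If the Gram matrix of \<open>y_1, ..., y_k\<close> is entrywise
  within \<open>eta * N\<close> of \<open>N * Id\<close>, where \<open>2^k * eta \<le> 1/2\<close>, an induction along the
  Gram-Schmidt recursion shows \<open>|<y_p, w_i> - N [p = i]| \<le> 2^(i-1) * eta * N\<close> for \<open>p \<ge> i\<close>.
  Hence all Gram-Schmidt coefficients have modulus at most 1 and \<open>N / |w_i|^2 = 1 + O(2^k * eta)\<close>,
  so \<open>|min f - min g| \<le> 2^k * eta * min g\<close>. The minimum of \<open>g\<close> is at most its value at a
  column \<open>l\<close> with \<open>|y_il| \<le> u\<close> for all \<open>i \<le> k\<close>, where \<open>|w_il| \<le> 2^(i-1) * u\<close>.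

  Chebyshev's inequality makes the Gram matrix close for \<open>eta = N^(-1/4)\<close> outside probability
  \<open>O(N^(-1/2))\<close>, and the second-moment method applied to the number of such columns shows that
  one exists outside probability \<open>O(u^(-k) / N)\<close>. With \<open>u = N^(-15/(16k))\<close> both probabilities
  vanish, and the deviation is \<open>O(N^(2/k) * eta * u^2) = O(N^(1/(8k) - 1/4))\<close>.
\<close>

declare gs.simps [simp del]

lemma ipN_commute: "ipN N u v = ipN N v u"
  unfolding ipN_def by (simp add: mult.commute)

lemma ipN_self_nonneg: "0 \<le> ipN N u u"
  unfolding ipN_def by (simp add: sum_nonneg)

lemma ipN_eq_0_if_self_eq_0:
  assumes "ipN N u u = 0"
  shows "ipN N v u = 0"
proof -
  have "\<forall>l\<in>{1..N}. u l * u l = 0"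
    using assms unfolding ipN_def by (subst sum_nonneg_eq_0_iff[symmetric]) auto
  then show ?thesis
    unfolding ipN_def by simp
qed

lemma ipN_diff_sum_left:
  assumes "finite J"
  shows "ipN N (\<lambda>l. u l - (\<Sum>j\<in>J. c j * v j l)) z = ipN N u z - (\<Sum>j\<in>J. c j * ipN N (v j) z)"
  unfolding ipN_def
  by (simp add: left_diff_distrib sum_subtractf sum_distrib_left sum_distrib_right mult.assoc
      sum.swap[of _ J])

lemma ipN_gs_left:
  "ipN N (gs N y i) z = ipN N (y i) z - (\<Sum>j\<in>{1..<i}.
     (ipN N (y i) (gs N y j) / ipN N (gs N y j) (gs N y j)) * ipN N (gs N y j) z)"
  unfolding gs.simps[of N y i] by (rule ipN_diff_sum_left) simp

text \<open>No non-degeneracy is needed: a vector of norm zero is orthogonal to everything, and its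
  Gram-Schmidt coefficient is the junk value \<open>x / 0 = 0\<close>.\<close>
lemma gs_orthogonal:
  assumes "1 \<le> m" "m < i"
  shows "ipN N (gs N y i) (gs N y m) = 0"
  using assms
proof (induction i arbitrary: m rule: less_induct)
  case (less i)
  let ?w = "gs N y"
  have other: "ipN N (?w j) (?w m) = 0" if "j \<in> {1..<i}" "j \<noteq> m" for j
  proof (cases "j < m")
    case True
    then show ?thesis
      using less.IH[of m j] less.prems that by (simp add: ipN_commute)
  next
    case False
    then show ?thesis
      using less.IH[of j m] less.prems that by simp
  qed
  have "(\<Sum>j\<in>{1..<i}. (ipN N (y i) (?w j) / ipN N (?w j) (?w j)) * ipN N (?w j) (?w m))
      = ipN N (y i) (?w m) / ipN N (?w m) (?w m) * ipN N (?w m) (?w m)"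
    using less.prems other by (subst sum.remove[of _ m]) auto
  also have "\<dots> = ipN N (y i) (?w m)"
    using ipN_eq_0_if_self_eq_0[of N "?w m" "y i"] by (cases "ipN N (?w m) (?w m) = 0") auto
  finally show ?case
    by (simp add: ipN_gs_left[of N y i])
qed

lemma gs_ipN_self: "ipN N (gs N y i) (gs N y i) = ipN N (y i) (gs N y i)"
  using gs_orthogonal[of _ i N y] by (simp add: ipN_gs_left[of N y i "gs N y i"] ipN_commute)

lemma gsn_scaled_sq:
  "(sqrt (real N) * gsn N y i l)\<^sup>2 = real N / ipN N (gs N y i) (gs N y i) * (gs N y i l)\<^sup>2"
  unfolding gsn_def using ipN_self_nonneg[of N "gs N y i"]
  by (simp add: power_mult_distrib power_divide)

lemma sum_power2_atLeastLessThan: "1 \<le> i \<Longrightarrow> (\<Sum>m=1..<i. (2::real) ^ (m - 1)) = 2 ^ (i - 1) - 1"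
proof (induction i rule: dec_induct)
  case (step i)
  then show ?case by (cases i) simp_all
qed simp

lemma Min_image_relative_close:
  fixes f g :: "'a \<Rightarrow> real"
  assumes "finite J" "J \<noteq> {}" "0 \<le> \<delta>" "\<delta> \<le> 1"
    and close: "\<And>j. j \<in> J \<Longrightarrow> \<bar>f j - g j\<bar> \<le> \<delta> * g j"
  shows "\<bar>Min (f ` J) - Min (g ` J)\<bar> \<le> \<delta> * Min (g ` J)"
proof -
  have "Min (f ` J) \<in> f ` J" "Min (g ` J) \<in> g ` J"
    using assms(1,2) by simp_all
  then obtain jf jg where jf: "jf \<in> J" "Min (f ` J) = f jf" and jg: "jg \<in> J" "Min (g ` J) = g jg"
    by blast
  have "Min (f ` J) \<le> f jg"
    using assms(1) jg(1) by simp
  also have "\<dots> \<le> (1 + \<delta>) * Min (g ` J)"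
    using close[OF jg(1)] jg(2) by (simp add: algebra_simps)
  finally have upper: "Min (f ` J) \<le> (1 + \<delta>) * Min (g ` J)" .
  have "(1 - \<delta>) * Min (g ` J) \<le> (1 - \<delta>) * g jf"
    using assms(1,4) jf(1) by (intro mult_left_mono) auto
  also have "\<dots> \<le> Min (f ` J)"
    using close[OF jf(1)] jf(2) by (simp add: algebra_simps)
  finally have lower: "(1 - \<delta>) * Min (g ` J) \<le> Min (f ` J)" .
  show ?thesis
    using upper lower by (simp add: algebra_simps abs_le_iff)
qed

locale near_orthonormal =
  fixes N k :: nat and \<eta> :: real and y :: "nat \<Rightarrow> nat \<Rightarrow> real"
  assumes N_pos: "0 < N"
    and eta_nonneg: "0 \<le> \<eta>"
    and eta_small: "2 ^ k * \<eta> \<le> 1 / 2"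
    and gram_close: "\<And>p i. p \<in> {1..k} \<Longrightarrow> i \<in> {1..k} \<Longrightarrow>
      \<bar>ipN N (y p) (y i) - (if p = i then real N else 0)\<bar> \<le> \<eta> * N"
begin

lemma error_bound_le_half: "m \<le> k \<Longrightarrow> 2 ^ (m - 1) * \<eta> * N \<le> N / 2"
proof -
  assume "m \<le> k"
  then have "(2::real) ^ (m - 1) * \<eta> \<le> 2 ^ k * \<eta>"
    using eta_nonneg by (intro mult_right_mono power_increasing) auto
  then show ?thesis
    using eta_small N_pos by (simp add: mult_right_mono)
qed

lemma gs_norm_and_coeff_bounds:
  assumes m: "m \<in> {1..k}"
    and close: "\<And>p. p \<in> {m..k} \<Longrightarrow>
      \<bar>ipN N (y p) (gs N y m) - (if p = m then real N else 0)\<bar> \<le> 2 ^ (m - 1) * \<eta> * N"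
  shows "real N / 2 \<le> ipN N (gs N y m) (gs N y m)"
    and "\<And>p. p \<in> {m<..k} \<Longrightarrow> \<bar>ipN N (y p) (gs N y m) / ipN N (gs N y m) (gs N y m)\<bar> \<le> 1"
proof -
  show norm: "real N / 2 \<le> ipN N (gs N y m) (gs N y m)"
    using close[of m] error_bound_le_half[of m] m by (simp add: gs_ipN_self)
  fix p assume "p \<in> {m<..k}"
  then have "\<bar>ipN N (y p) (gs N y m)\<bar> \<le> real N / 2"
    using close[of p] error_bound_le_half[of m] m by simp
  then show "\<bar>ipN N (y p) (gs N y m) / ipN N (gs N y m) (gs N y m)\<bar> \<le> 1"
    using norm N_pos by (simp add: divide_le_eq_1)
qed

lemma gs_inner_close:
  assumes "i \<in> {1..k}" "p \<in> {i..k}"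
  shows "\<bar>ipN N (y p) (gs N y i) - (if p = i then real N else 0)\<bar> \<le> 2 ^ (i - 1) * \<eta> * N"
  using assms
proof (induction i arbitrary: p rule: less_induct)
  case (less i)
  let ?c = "\<lambda>m. ipN N (y i) (gs N y m) / ipN N (gs N y m) (gs N y m)"
  have "\<bar>?c m * ipN N (gs N y m) (y p)\<bar> \<le> 2 ^ (m - 1) * \<eta> * N" if m: "m \<in> {1..<i}" for m
  proof -
    have close_m: "\<And>q. q \<in> {m..k} \<Longrightarrow> \<bar>ipN N (y q) (gs N y m) - (if q = m then real N else 0)\<bar>
        \<le> 2 ^ (m - 1) * \<eta> * N"
      using less.IH m less.prems by simp
    have "\<bar>?c m\<bar> \<le> 1"
      using gs_norm_and_coeff_bounds(2)[OF _ close_m, of i] m less.prems by auto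
    moreover have "\<bar>ipN N (gs N y m) (y p)\<bar> \<le> 2 ^ (m - 1) * \<eta> * N"
      using close_m[of p] m less.prems by (simp add: ipN_commute)
    ultimately have "\<bar>?c m\<bar> * \<bar>ipN N (gs N y m) (y p)\<bar> \<le> 1 * (2 ^ (m - 1) * \<eta> * N)"
      by (intro mult_mono) auto
    then show ?thesis
      by (simp add: abs_mult)
  qed
  then have "\<bar>\<Sum>m=1..<i. ?c m * ipN N (gs N y m) (y p)\<bar> \<le> (\<Sum>m=1..<i. 2 ^ (m - 1) * \<eta> * N)"
    by (intro order_trans[OF sum_abs sum_mono]) auto
  also have "\<dots> = (\<Sum>m=1..<i. 2 ^ (m - 1)) * \<eta> * N"
    by (simp add: sum_distrib_right)
  also have "\<dots> = (2 ^ (i - 1) - 1) * \<eta> * N"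
    using less.prems sum_power2_atLeastLessThan[of i] by simp
  finally have "\<bar>\<Sum>m=1..<i. ?c m * ipN N (gs N y m) (y p)\<bar> \<le> (2 ^ (i - 1) - 1) * \<eta> * N" .
  moreover have "\<bar>ipN N (y i) (y p) - (if p = i then real N else 0)\<bar> \<le> \<eta> * N"
    using gram_close[of i p] less.prems by (auto split: if_splits)
  moreover have "ipN N (y p) (gs N y i) = ipN N (y i) (y p) - (\<Sum>m=1..<i. ?c m * ipN N (gs N y m) (y p))"
    by (simp add: ipN_commute[of N "y p"] ipN_gs_left[of N y i "y p"])
  moreover have "(2::real) ^ (i - 1) * \<eta> * N = \<eta> * N + (2 ^ (i - 1) - 1) * \<eta> * N"
    by (simp add: algebra_simps)
  ultimately show ?case
    by (smt (verit))
qed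

lemma gs_norm_ge: "i \<in> {1..k} \<Longrightarrow> real N / 2 \<le> ipN N (gs N y i) (gs N y i)"
  using gs_norm_and_coeff_bounds(1)[OF _ gs_inner_close] by auto

lemma gs_coeff_le_1:
  "i \<in> {1..k} \<Longrightarrow> m \<in> {1..<i} \<Longrightarrow> \<bar>ipN N (y i) (gs N y m) / ipN N (gs N y m) (gs N y m)\<bar> \<le> 1"
  using gs_norm_and_coeff_bounds(2)[OF _ gs_inner_close, of m i] by auto

lemma gs_norm_ratio_close:
  assumes i: "i \<in> {1..k}"
  shows "\<bar>real N / ipN N (gs N y i) (gs N y i) - 1\<bar> \<le> 2 ^ k * \<eta>"
proof -
  let ?n = "ipN N (gs N y i) (gs N y i)"
  have n_ge: "real N / 2 \<le> ?n"
    using gs_norm_ge[OF i] .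
  then have n_pos: "0 < ?n"
    using N_pos by linarith
  have "real N / ?n - 1 = (real N - ?n) / ?n"
    using n_pos by (simp add: field_simps)
  then have "\<bar>real N / ?n - 1\<bar> = \<bar>?n - real N\<bar> / ?n"
    using n_pos by (simp add: abs_minus_commute)
  also have "\<dots> \<le> (2 ^ (i - 1) * \<eta> * N) / (real N / 2)"
    using gs_inner_close[OF i, of i] i n_ge N_pos
    by (intro frac_le) (auto simp: abs_minus_commute gs_ipN_self)
  also have "\<dots> = 2 ^ i * \<eta>"
    using N_pos i by (cases i) (auto simp: field_simps)
  also have "\<dots> \<le> 2 ^ k * \<eta>"
    using i eta_nonneg by (intro mult_right_mono power_increasing) auto
  finally show ?thesis .
qed

lemma gs_entry_bound:
  assumes small: "\<And>p. p \<in> {1..k} \<Longrightarrow> \<bar>y p l\<bar> \<le> u"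
  shows "i \<in> {1..k} \<Longrightarrow> \<bar>gs N y i l\<bar> \<le> 2 ^ (i - 1) * u"
proof (induction i rule: less_induct)
  case (less i)
  let ?c = "\<lambda>j. ipN N (y i) (gs N y j) / ipN N (gs N y j) (gs N y j)"
  have "\<bar>?c j * gs N y j l\<bar> \<le> 2 ^ (j - 1) * u" if j: "j \<in> {1..<i}" for j
  proof -
    have "\<bar>?c j\<bar> * \<bar>gs N y j l\<bar> \<le> 1 * (2 ^ (j - 1) * u)"
      using gs_coeff_le_1[OF less.prems j] less.IH[of j] j less.prems by (intro mult_mono) auto
    then show ?thesis
      by (simp add: abs_mult)
  qed
  then have "\<bar>\<Sum>j=1..<i. ?c j * gs N y j l\<bar> \<le> (\<Sum>j=1..<i. 2 ^ (j - 1) * u)"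
    by (intro order_trans[OF sum_abs sum_mono]) auto
  also have "\<dots> = (\<Sum>j=1..<i. 2 ^ (j - 1)) * u"
    by (simp add: sum_distrib_right)
  also have "\<dots> = (2 ^ (i - 1) - 1) * u"
    using less.prems sum_power2_atLeastLessThan[of i] by simp
  finally have "\<bar>\<Sum>j=1..<i. ?c j * gs N y j l\<bar> \<le> (2 ^ (i - 1) - 1) * u" .
  moreover have "\<bar>y i l\<bar> \<le> u"
    using small less.prems .
  moreover have "gs N y i l = y i l - (\<Sum>j=1..<i. ?c j * gs N y j l)"
    by (simp add: gs.simps[of N y i])
  moreover have "(2::real) ^ (i - 1) * u = u + (2 ^ (i - 1) - 1) * u"
    by (simp add: algebra_simps)
  ultimately show ?case
    by (smt (verit))
qed

lemma weighted_Min_close: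
  assumes a: "\<And>i. i \<in> {1..k} \<Longrightarrow> 0 \<le> a i"
    and l: "l \<in> {1..N}" and small: "\<And>p. p \<in> {1..k} \<Longrightarrow> \<bar>y p l\<bar> \<le> u"
  shows "\<bar>(MIN j\<in>{1..N}. \<Sum>i=1..k. a i * (sqrt (real N) * gsn N y i j)\<^sup>2)
      - (MIN j\<in>{1..N}. \<Sum>i=1..k. a i * (gs N y i j)\<^sup>2)\<bar> \<le> 8 ^ k * (\<Sum>i=1..k. a i) * \<eta> * u\<^sup>2"
proof -
  let ?g = "\<lambda>j. \<Sum>i=1..k. a i * (gs N y i j)\<^sup>2"
  have "\<bar>(\<Sum>i=1..k. a i * (sqrt (real N) * gsn N y i j)\<^sup>2) - ?g j\<bar> \<le> 2 ^ k * \<eta> * ?g j" for j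
  proof -
    have "\<bar>(\<Sum>i=1..k. a i * (sqrt (real N) * gsn N y i j)\<^sup>2) - ?g j\<bar>
        = \<bar>\<Sum>i=1..k. (real N / ipN N (gs N y i) (gs N y i) - 1) * (a i * (gs N y i j)\<^sup>2)\<bar>"
      unfolding gsn_scaled_sq by (simp add: sum_subtractf[symmetric] algebra_simps)
    also have "\<dots> \<le> (\<Sum>i=1..k. 2 ^ k * \<eta> * (a i * (gs N y i j)\<^sup>2))"
      using gs_norm_ratio_close a
      by (intro order_trans[OF sum_abs sum_mono]) (auto simp: abs_mult intro!: mult_right_mono)
    finally show ?thesis
      by (simp add: sum_distrib_left)
  qed
  then have "\<bar>(MIN j\<in>{1..N}. \<Sum>i=1..k. a i * (sqrt (real N) * gsn N y i j)\<^sup>2) - Min (?g ` {1..N})\<bar>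
      \<le> 2 ^ k * \<eta> * Min (?g ` {1..N})"
    using l eta_nonneg eta_small by (intro Min_image_relative_close) auto
  also have "\<dots> \<le> 2 ^ k * \<eta> * ?g l"
    using l eta_nonneg by (intro mult_left_mono) auto
  also have "?g l \<le> (\<Sum>i=1..k. a i * (4 ^ k * u\<^sup>2))"
  proof (intro sum_mono mult_left_mono)
    fix i assume i: "i \<in> {1..k}"
    have "(gs N y i l)\<^sup>2 \<le> (2 ^ (i - 1) * u)\<^sup>2"
      using power_mono[OF gs_entry_bound[OF small i] abs_ge_zero, of 2] by simp
    also have "\<dots> \<le> (2 ^ k * u)\<^sup>2"
      using i small[of i] by (intro power_mono mult_right_mono power_increasing) auto
    also have "\<dots> = 4 ^ k * u\<^sup>2"
      by (simp add: power_mult_distrib power2_eq_square flip: power_mult_distrib)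
    finally show "(gs N y i l)\<^sup>2 \<le> 4 ^ k * u\<^sup>2" .
  qed (use a in auto)
  also have "2 ^ k * \<eta> * (\<Sum>i=1..k. a i * (4 ^ k * u\<^sup>2)) = 8 ^ k * (\<Sum>i=1..k. a i) * \<eta> * u\<^sup>2"
    by (simp only: sum_distrib_right[symmetric]) (simp add: mult_ac flip: power_mult_distrib)
  finally show ?thesis
    using eta_nonneg by (simp add: mult_left_mono)
qed

end

lemma integral_PiM_prod_subset:
  fixes M :: "'i \<Rightarrow> 'a measure" and h :: "'i \<Rightarrow> 'a \<Rightarrow> real"
  assumes prob: "\<And>i. prob_space (M i)" and "finite I" "S \<subseteq> I"
    and int: "\<And>x. x \<in> S \<Longrightarrow> integrable (M x) (h x)"
  shows "integrable (PiM I M) (\<lambda>\<omega>. \<Prod>x\<in>S. h x (\<omega> x))"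
    and "(\<integral>\<omega>. (\<Prod>x\<in>S. h x (\<omega> x)) \<partial>PiM I M) = (\<Prod>x\<in>S. integral\<^sup>L (M x) (h x))"
proof -
  interpret product_sigma_finite M
    using prob by (simp add: product_sigma_finite_def prob_space_imp_sigma_finite)
  define h' where "h' x = (if x \<in> S then h x else (\<lambda>_. 1))" for x
  have "(\<Prod>x\<in>I. h' x (\<omega> x)) = (\<Prod>x\<in>S. h x (\<omega> x))" for \<omega>
    using assms(2,3) by (intro prod.mono_neutral_cong_right) (auto simp: h'_def)
  moreover have "(\<Prod>x\<in>I. integral\<^sup>L (M x) (h' x)) = (\<Prod>x\<in>S. integral\<^sup>L (M x) (h x))"
    using assms(2,3) prob_space.prob_space[OF prob]
    by (intro prod.mono_neutral_cong_right) (auto simp: h'_def)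
  moreover have "\<And>x. integrable (M x) (h' x)"
    using int prob_space.finite_measure[OF prob] by (simp add: h'_def finite_measure.integrable_const)
  ultimately show "integrable (PiM I M) (\<lambda>\<omega>. \<Prod>x\<in>S. h x (\<omega> x))"
    and "(\<integral>\<omega>. (\<Prod>x\<in>S. h x (\<omega> x)) \<partial>PiM I M) = (\<Prod>x\<in>S. integral\<^sup>L (M x) (h x))"
    using product_integrable_prod[OF assms(2), of h'] product_integral_prod[OF assms(2), of h'] by auto
qed

lemma block_products_measurable:
  fixes h :: "'a \<Rightarrow> real"
  assumes "\<And>l. l \<in> L \<Longrightarrow> S l \<subseteq> I" "h \<in> borel_measurable M"
  shows "(\<lambda>\<omega>. \<Sum>l\<in>L. \<Prod>x\<in>S l. h (\<omega> x)) \<in> borel_measurable (PiM I (\<lambda>_. M))"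
proof -
  have "(\<lambda>\<omega>. h (\<omega> x)) \<in> borel_measurable (PiM I (\<lambda>_. M))" if "x \<in> I" for x
    using measurable_compose[OF measurable_component_singleton[OF that] assms(2)] by simp
  then show ?thesis
    using assms(1) by (intro borel_measurable_sum borel_measurable_prod) blast
qed

lemma (in prob_space) variance_sum_uncorrelated:
  fixes Y :: "'l \<Rightarrow> 'a \<Rightarrow> real"
  assumes "finite L"
    and int: "\<And>l. l \<in> L \<Longrightarrow> integrable M (Y l)"
    and int_mult: "\<And>l l'. l \<in> L \<Longrightarrow> l' \<in> L \<Longrightarrow> integrable M (\<lambda>\<omega>. Y l \<omega> * Y l' \<omega>)"
    and uncorrelated: "\<And>l l'. l \<in> L \<Longrightarrow> l' \<in> L \<Longrightarrow> l \<noteq> l' \<Longrightarrow>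
      expectation (\<lambda>\<omega>. Y l \<omega> * Y l' \<omega>) = expectation (Y l) * expectation (Y l')"
  shows "variance (\<lambda>\<omega>. \<Sum>l\<in>L. Y l \<omega>) = (\<Sum>l\<in>L. variance (Y l))"
proof -
  have sq: "(\<lambda>\<omega>. (\<Sum>l\<in>L. Y l \<omega>)\<^sup>2) = (\<lambda>\<omega>. \<Sum>l\<in>L. \<Sum>l'\<in>L. Y l \<omega> * Y l' \<omega>)"
    by (simp add: power2_eq_square sum_product)
  have "integrable M (\<lambda>\<omega>. (\<Sum>l\<in>L. Y l \<omega>)\<^sup>2)"
    unfolding sq using int_mult by auto
  then have "variance (\<lambda>\<omega>. \<Sum>l\<in>L. Y l \<omega>)
      = expectation (\<lambda>\<omega>. (\<Sum>l\<in>L. Y l \<omega>)\<^sup>2) - (expectation (\<lambda>\<omega>. \<Sum>l\<in>L. Y l \<omega>))\<^sup>2"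
    using int by (intro variance_eq) auto
  also have "\<dots> = (\<Sum>l\<in>L. \<Sum>l'\<in>L. expectation (\<lambda>\<omega>. Y l \<omega> * Y l' \<omega>) - expectation (Y l) * expectation (Y l'))"
    unfolding sq using int int_mult
    by (simp add: Bochner_Integration.integral_sum power2_eq_square sum_product sum_subtractf)
  also have "\<dots> = (\<Sum>l\<in>L. expectation (\<lambda>\<omega>. Y l \<omega> * Y l \<omega>) - expectation (Y l) * expectation (Y l))"
  proof (intro sum.cong refl)
    fix l assume l: "l \<in> L"
    have "(\<Sum>l'\<in>L - {l}. expectation (\<lambda>\<omega>. Y l \<omega> * Y l' \<omega>) - expectation (Y l) * expectation (Y l')) = 0"
      using l uncorrelated by (intro sum.neutral) auto
    then show "(\<Sum>l'\<in>L. expectation (\<lambda>\<omega>. Y l \<omega> * Y l' \<omega>) - expectation (Y l) * expectation (Y l'))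
        = expectation (\<lambda>\<omega>. Y l \<omega> * Y l \<omega>) - expectation (Y l) * expectation (Y l)"
      using assms(1) l by (simp add: sum.remove)
  qed
  also have "\<dots> = (\<Sum>l\<in>L. variance (Y l))"
    using int int_mult by (intro sum.cong refl) (subst variance_eq, auto simp: power2_eq_square)
  finally show ?thesis .
qed

lemma prob_block_products_deviation:
  fixes M :: "'a measure" and h :: "'a \<Rightarrow> real" and S :: "'l \<Rightarrow> 'i set"
  assumes "prob_space M" "finite I" "finite L"
    and S: "\<And>l. l \<in> L \<Longrightarrow> S l \<subseteq> I" "disjoint_family_on S L"
    and h: "integrable M h" "integrable M (\<lambda>t. (h t)\<^sup>2)" and "0 < a"
  shows "measure (PiM I (\<lambda>_. M)) {\<omega> \<in> space (PiM I (\<lambda>_. M)).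
      a \<le> \<bar>(\<Sum>l\<in>L. \<Prod>x\<in>S l. h (\<omega> x)) - (\<Sum>l\<in>L. (\<integral>t. h t \<partial>M) ^ card (S l))\<bar>}
    \<le> (\<Sum>l\<in>L. (\<integral>t. (h t)\<^sup>2 \<partial>M) ^ card (S l)) / a\<^sup>2"
proof -
  interpret prob_space "PiM I (\<lambda>_. M)"
    using assms(1) by (rule prob_space_PiM)
  define Y where "Y l = (\<lambda>\<omega>. \<Prod>x\<in>S l. h (\<omega> x))" for l
  note prod_moments = integral_PiM_prod_subset[where M = "\<lambda>_. M", OF assms(1,2)]
  have Y: "integrable (PiM I (\<lambda>_. M)) (Y l)" "expectation (Y l) = (\<integral>t. h t \<partial>M) ^ card (S l)"
    if "l \<in> L" for l
    using prod_moments[OF S(1)[OF that], of "\<lambda>_. h"] h by (simp_all add: Y_def)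
  have Y_sq: "integrable (PiM I (\<lambda>_. M)) (\<lambda>\<omega>. Y l \<omega> * Y l \<omega>)"
    "expectation (\<lambda>\<omega>. Y l \<omega> * Y l \<omega>) = (\<integral>t. (h t)\<^sup>2 \<partial>M) ^ card (S l)" if "l \<in> L" for l
    using prod_moments[OF S(1)[OF that], of "\<lambda>_ t. (h t)\<^sup>2"] h
    by (simp_all add: Y_def power2_eq_square flip: prod.distrib)
  have Y_mult: "integrable (PiM I (\<lambda>_. M)) (\<lambda>\<omega>. Y l \<omega> * Y l' \<omega>)"
    "expectation (\<lambda>\<omega>. Y l \<omega> * Y l' \<omega>) = expectation (Y l) * expectation (Y l')"
    if l: "l \<in> L" "l' \<in> L" "l \<noteq> l'" for l l'
  proof -
    have "S l \<inter> S l' = {}" "finite (S l)" "finite (S l')"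
      using S assms(2) l by (auto simp: disjoint_family_on_def intro: finite_subset)
    then have "Y l \<omega> * Y l' \<omega> = (\<Prod>x\<in>S l \<union> S l'. h (\<omega> x))" for \<omega>
      by (simp add: Y_def prod.union_disjoint)
    then show "integrable (PiM I (\<lambda>_. M)) (\<lambda>\<omega>. Y l \<omega> * Y l' \<omega>)"
      "expectation (\<lambda>\<omega>. Y l \<omega> * Y l' \<omega>) = expectation (Y l) * expectation (Y l')"
      using prod_moments[of "S l \<union> S l'" "\<lambda>_. h"] S(1) l h \<open>S l \<inter> S l' = {}\<close> Y
        \<open>finite (S l)\<close> \<open>finite (S l')\<close>
      by (simp_all add: card_Un_disjoint power_add)
  qed
  have Y_mult_int: "integrable (PiM I (\<lambda>_. M)) (\<lambda>\<omega>. Y l \<omega> * Y l' \<omega>)" if "l \<in> L" "l' \<in> L" for l l'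
    using Y_sq Y_mult that by (cases "l = l'") auto
  have "variance (\<lambda>\<omega>. \<Sum>l\<in>L. Y l \<omega>) = (\<Sum>l\<in>L. variance (Y l))"
    by (rule variance_sum_uncorrelated[OF assms(3) Y(1) Y_mult_int Y_mult(2)])
  also have "\<dots> \<le> (\<Sum>l\<in>L. (\<integral>t. (h t)\<^sup>2 \<partial>M) ^ card (S l))"
    using Y Y_sq by (intro sum_mono) (subst variance_eq, auto simp: power2_eq_square)
  finally have "variance (\<lambda>\<omega>. \<Sum>l\<in>L. Y l \<omega>) / a\<^sup>2 \<le> (\<Sum>l\<in>L. (\<integral>t. (h t)\<^sup>2 \<partial>M) ^ card (S l)) / a\<^sup>2"
    by (simp add: divide_right_mono)
  moreover have "prob {\<omega> \<in> space (PiM I (\<lambda>_. M)).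
      a \<le> \<bar>(\<Sum>l\<in>L. Y l \<omega>) - expectation (\<lambda>\<omega>. \<Sum>l\<in>L. Y l \<omega>)\<bar>}
      \<le> variance (\<lambda>\<omega>. \<Sum>l\<in>L. Y l \<omega>) / a\<^sup>2"
    using Y(1) Y_mult_int \<open>0 < a\<close>
    by (intro Chebyshev_inequality) (auto simp: power2_eq_square sum_product)
  ultimately show ?thesis
    using Y by (simp add: Y_def)
qed

lemma prob_block_products_all_zero:
  fixes M :: "'a measure" and h :: "'a \<Rightarrow> real" and S :: "'l \<Rightarrow> 'i set"
  assumes "prob_space M" "finite I" "finite L"
    and S: "\<And>l. l \<in> L \<Longrightarrow> S l \<subseteq> I" "disjoint_family_on S L"
    and h: "integrable M h" "integrable M (\<lambda>t. (h t)\<^sup>2)"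
    and mean_pos: "0 < (\<Sum>l\<in>L. (\<integral>t. h t \<partial>M) ^ card (S l))"
    and A: "A \<subseteq> {\<omega> \<in> space (PiM I (\<lambda>_. M)). \<forall>l\<in>L. (\<Prod>x\<in>S l. h (\<omega> x)) = 0}"
  shows "measure (PiM I (\<lambda>_. M)) A
    \<le> (\<Sum>l\<in>L. (\<integral>t. (h t)\<^sup>2 \<partial>M) ^ card (S l)) / (\<Sum>l\<in>L. (\<integral>t. h t \<partial>M) ^ card (S l))\<^sup>2"
proof -
  interpret prob_space "PiM I (\<lambda>_. M)"
    using assms(1) by (rule prob_space_PiM)
  let ?m = "\<Sum>l\<in>L. (\<integral>t. h t \<partial>M) ^ card (S l)"
  let ?D = "{\<omega> \<in> space (PiM I (\<lambda>_. M)). ?m \<le> \<bar>(\<Sum>l\<in>L. \<Prod>x\<in>S l. h (\<omega> x)) - ?m\<bar>}"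
  have "A \<subseteq> ?D"
    using A mean_pos by auto
  moreover have [measurable]: "(\<lambda>\<omega>. \<Sum>l\<in>L. \<Prod>x\<in>S l. h (\<omega> x)) \<in> borel_measurable (PiM I (\<lambda>_. M))"
    using S(1) borel_measurable_integrable[OF h(1)] by (rule block_products_measurable)
  then have "?D \<in> sets (PiM I (\<lambda>_. M))"
    by measurable
  ultimately have "measure (PiM I (\<lambda>_. M)) A \<le> measure (PiM I (\<lambda>_. M)) ?D"
    by (rule finite_measure_mono)
  also have "\<dots> \<le> (\<Sum>l\<in>L. (\<integral>t. (h t)\<^sup>2 \<partial>M) ^ card (S l)) / ?m\<^sup>2"
    using assms by (intro prob_block_products_deviation) auto
  finally show ?thesis .
qed

lemma prob_space_gauss_space: "prob_space (gauss_space N)"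
  unfolding gauss_space_def by (intro prob_space_PiM prob_space_normal_density) simp

lemma gauss_coordinate_measurable:
  "x \<in> {1..N} \<times> {1..N} \<Longrightarrow> (\<lambda>\<omega>. \<omega> x) \<in> borel_measurable (gauss_space N)"
  unfolding gauss_space_def
  using measurable_component_singleton[of x "{1..N} \<times> {1..N}" "\<lambda>_. std_normal_distribution"]
  by (simp cong: measurable_cong_sets)

definition gram_deviation_event :: "nat \<Rightarrow> real \<Rightarrow> nat \<Rightarrow> nat \<Rightarrow> (nat \<times> nat \<Rightarrow> real) set" where
  "gram_deviation_event N b p i = {\<omega> \<in> space (gauss_space N).
     b \<le> \<bar>ipN N (yvec \<omega> p) (yvec \<omega> i) - (if p = i then real N else 0)\<bar>}"

definition no_small_column_event :: "nat \<Rightarrow> nat \<Rightarrow> real \<Rightarrow> (nat \<times> nat \<Rightarrow> real) set" where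
  "no_small_column_event N k u = {\<omega> \<in> space (gauss_space N). \<forall>l\<in>{1..N}. \<exists>i\<in>{1..k}. u < \<bar>\<omega> (i, l)\<bar>}"

lemma gram_deviation_event_sets:
  assumes "p \<in> {1..N}" "i \<in> {1..N}"
  shows "gram_deviation_event N b p i \<in> sets (gauss_space N)"
proof -
  have [measurable]: "(\<lambda>\<omega>. ipN N (yvec \<omega> p) (yvec \<omega> i)) \<in> borel_measurable (gauss_space N)"
    unfolding ipN_def yvec_def using assms
    by (intro borel_measurable_sum borel_measurable_times gauss_coordinate_measurable) auto
  show ?thesis
    unfolding gram_deviation_event_def by measurable
qed

lemma no_small_column_event_sets:
  assumes "k \<le> N"
  shows "no_small_column_event N k u \<in> sets (gauss_space N)"
proof -
  have "{\<omega> \<in> space (gauss_space N). u < \<bar>\<omega> (i, l)\<bar>} \<in> sets (gauss_space N)"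
    if "i \<in> {1..k}" "l \<in> {1..N}" for i l
  proof -
    have [measurable]: "(\<lambda>\<omega>. \<omega> (i, l)) \<in> borel_measurable (gauss_space N)"
      using that assms by (intro gauss_coordinate_measurable) auto
    show ?thesis
      by measurable
  qed
  then show ?thesis
    unfolding no_small_column_event_def
    by (intro sets.sets_Collect_finite_All sets.sets_Collect_finite_Ex) auto
qed

lemma measure_gram_deviation_event:
  assumes "p \<in> {1..N}" "i \<in> {1..N}" "0 < b"
  shows "measure (gauss_space N) (gram_deviation_event N b p i) \<le> 3 * real N / b\<^sup>2"
proof (cases "p = i")
  case True
  have "gram_deviation_event N b p i = {\<omega> \<in> space (gauss_space N).
      b \<le> \<bar>(\<Sum>l\<in>{1..N}. \<Prod>x\<in>{(i, l)}. (\<omega> x)\<^sup>2)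
        - (\<Sum>l\<in>{1..N}. (\<integral>t. t\<^sup>2 \<partial>std_normal_distribution) ^ card {(i, l)})\<bar>}"
    using True std_normal_distribution_even_moments(1)[of 1]
    by (simp add: gram_deviation_event_def ipN_def yvec_def power2_eq_square)
  also have "measure (gauss_space N) \<dots>
      \<le> (\<Sum>l\<in>{1..N}. (\<integral>t. (t\<^sup>2)\<^sup>2 \<partial>std_normal_distribution) ^ card {(i, l)}) / b\<^sup>2"
    unfolding gauss_space_def using assms
    by (intro prob_block_products_deviation prob_space_normal_density)
       (auto simp: disjoint_family_on_def integrable_std_normal_distribution_moment
          simp flip: power_mult)
  also have "\<dots> = 3 * real N / b\<^sup>2"
    using std_normal_distribution_even_moments(1)[of 2]
    by (simp add: fact_numeral flip: power_mult)
  finally show ?thesis .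
next
  case False
  have "gram_deviation_event N b p i = {\<omega> \<in> space (gauss_space N).
      b \<le> \<bar>(\<Sum>l\<in>{1..N}. \<Prod>x\<in>{(p, l), (i, l)}. \<omega> x)
        - (\<Sum>l\<in>{1..N}. (\<integral>t. t \<partial>std_normal_distribution) ^ card {(p, l), (i, l)})\<bar>}"
    using False integral_std_normal_distribution_moment_odd[of 1]
    by (simp add: gram_deviation_event_def ipN_def yvec_def)
  also have "measure (gauss_space N) \<dots>
      \<le> (\<Sum>l\<in>{1..N}. (\<integral>t. t\<^sup>2 \<partial>std_normal_distribution) ^ card {(p, l), (i, l)}) / b\<^sup>2"
    unfolding gauss_space_def using assms
    by (intro prob_block_products_deviation prob_space_normal_density)
       (auto simp: disjoint_family_on_def integrable_std_normal_distribution_moment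
          integrable_std_normal_distribution_moment[of 1, simplified])
  also have "\<dots> = real N / b\<^sup>2"
    using False std_normal_distribution_even_moments(1)[of 1] by simp
  also have "\<dots> \<le> 3 * real N / b\<^sup>2"
    by (simp add: divide_right_mono)
  finally show ?thesis .
qed

lemma std_normal_density_ge: "\<bar>x\<bar> \<le> 1 \<Longrightarrow> 1 / 6 \<le> std_normal_density x"
proof -
  assume "\<bar>x\<bar> \<le> 1"
  then have "x\<^sup>2 \<le> 1"
    by (simp add: abs_le_square_iff[of x 1, simplified])
  then have "1 / 2 \<le> exp (- x\<^sup>2 / 2)"
    using exp_ge_add_one_self[of "- x\<^sup>2 / 2"] by linarith
  moreover have "sqrt (2 * pi) \<le> 3"
    using pi_less_4 real_sqrt_le_mono[of "2 * pi" 9] by simp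
  ultimately have "1 / 6 \<le> exp (- x\<^sup>2 / 2) / sqrt (2 * pi)"
    by (simp add: field_simps)
  then show ?thesis
    by (simp add: std_normal_density_def)
qed

lemma std_normal_interval_ge:
  assumes "0 \<le> u" "u \<le> 1"
  shows "u / 3 \<le> measure std_normal_distribution {-u..u}"
proof -
  interpret prob_space std_normal_distribution
    by (rule prob_space_normal_density) simp
  have "ennreal (u / 3) = (\<integral>\<^sup>+ x. ennreal (1 / 6) * indicator {-u..u} x \<partial>lborel)"
    using assms by (simp add: nn_integral_cmult_indicator flip: ennreal_mult)
  also have "\<dots> \<le> (\<integral>\<^sup>+ x. ennreal (std_normal_density x) * indicator {-u..u} x \<partial>lborel)"
    using assms std_normal_density_ge by (intro nn_integral_mono) (auto simp: indicator_def)
  also have "\<dots> = emeasure std_normal_distribution {-u..u}"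
    by (simp add: emeasure_density)
  finally show ?thesis
    using assms by (simp add: emeasure_eq_measure)
qed

lemma measure_no_small_column_event:
  assumes "1 \<le> k" "k \<le> N" "0 < u" "u \<le> 1"
  shows "measure (gauss_space N) (no_small_column_event N k u) \<le> (3 / u) ^ k / real N"
proof -
  interpret std: prob_space std_normal_distribution
    by (rule prob_space_normal_density) simp
  define q where "q = measure std_normal_distribution {-u..u}"
  define h :: "real \<Rightarrow> real" where "h = indicator {-u..u}"
  define S where "S l = (\<lambda>i. (i, l)) ` {1..k}" for l :: nat
  have q: "u / 3 \<le> q"
    unfolding q_def using assms by (intro std_normal_interval_ge) auto
  have h_sq: "(\<lambda>t. (h t)\<^sup>2) = h"
    by (auto simp: h_def indicator_def)
  have h_int: "integrable std_normal_distribution h"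
    unfolding h_def by (intro integrable_real_indicator) (auto simp: std.emeasure_eq_measure)
  have moments: "(\<Sum>l\<in>{1..N}. (\<integral>t. h t \<partial>std_normal_distribution) ^ card (S l)) = real N * q ^ k"
    by (simp add: h_def q_def S_def card_image inj_on_def)
  have mean_pos: "0 < (\<Sum>l\<in>{1..N}. (\<integral>t. h t \<partial>std_normal_distribution) ^ card (S l))"
    unfolding moments using assms q by simp
  have "no_small_column_event N k u \<subseteq> {\<omega> \<in> space (gauss_space N). \<forall>l\<in>{1..N}. (\<Prod>x\<in>S l. h (\<omega> x)) = 0}"
    by (force simp: no_small_column_event_def S_def h_def indicator_def intro!: prod_zero)
  then have "measure (gauss_space N) (no_small_column_event N k u)
      \<le> (\<Sum>l\<in>{1..N}. (\<integral>t. (h t)\<^sup>2 \<partial>std_normal_distribution) ^ card (S l))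
        / (\<Sum>l\<in>{1..N}. (\<integral>t. h t \<partial>std_normal_distribution) ^ card (S l))\<^sup>2"
    unfolding gauss_space_def using assms h_int
    by (intro prob_block_products_all_zero prob_space_normal_density mean_pos)
       (auto simp: h_sq S_def disjoint_family_on_def)
  also have "\<dots> = 1 / (real N * q ^ k)"
    unfolding h_sq moments by (simp add: power2_eq_square)
  also have "\<dots> \<le> 1 / (real N * (u / 3) ^ k)"
    using assms q by (intro divide_left_mono mult_left_mono power_mono mult_pos_pos) auto
  also have "\<dots> = (3 / u) ^ k / real N"
    by (simp add: power_divide)
  finally show ?thesis .
qed

lemma tendsto_measure_exceeds_0:
  fixes X :: "nat \<Rightarrow> 'a \<Rightarrow> real" and M :: "nat \<Rightarrow> 'a measure"
  assumes "\<And>n. prob_space (M n)" and "(\<lambda>n. measure (M n) (B n)) \<longlonglongrightarrow> 0" and "r \<longlonglongrightarrow> 0"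
    and "eventually (\<lambda>n. B n \<in> sets (M n) \<and> (\<forall>\<omega> \<in> space (M n) - B n. \<bar>X n \<omega>\<bar> \<le> r n)) sequentially"
  shows "\<forall>\<epsilon>>0. (\<lambda>n. measure (M n) {\<omega> \<in> space (M n). \<bar>X n \<omega>\<bar> > \<epsilon>}) \<longlonglongrightarrow> 0"
proof (intro allI impI tendsto_sandwich[OF _ _ tendsto_const assms(2)])
  fix \<epsilon> :: real
  assume "0 < \<epsilon>"
  with assms(3) have "eventually (\<lambda>n. r n < \<epsilon>) sequentially"
    by (rule order_tendstoD)
  with assms(4) show "eventually (\<lambda>n. measure (M n) {\<omega> \<in> space (M n). \<bar>X n \<omega>\<bar> > \<epsilon>}
      \<le> measure (M n) (B n)) sequentially"
  proof eventually_elim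
    case (elim n)
    then have "{\<omega> \<in> space (M n). \<bar>X n \<omega>\<bar> > \<epsilon>} \<subseteq> B n"
      by force
    then show ?case
      using elim prob_space.finite_measure[OF assms(1)] finite_measure.finite_measure_mono by blast
  qed
qed simp

definition bad_event :: "nat \<Rightarrow> nat \<Rightarrow> (nat \<times> nat \<Rightarrow> real) set" where
  "bad_event k N =
     (\<Union>(p, i)\<in>{1..k} \<times> {1..k}. gram_deviation_event N (real N powr (-1/4) * real N) p i)
     \<union> no_small_column_event N k (real N powr (- 15 / (16 * real k)))"

lemma bad_event_sets: "k \<le> N \<Longrightarrow> bad_event k N \<in> sets (gauss_space N)"
  unfolding bad_event_def
  by (intro sets.Un sets.finite_UN no_small_column_event_sets) (auto intro: gram_deviation_event_sets)

lemma measure_bad_event_le: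
  assumes "1 \<le> k" "k \<le> N"
  shows "measure (gauss_space N) (bad_event k N)
    \<le> (real k)\<^sup>2 * (3 * real N / (real N powr (-1/4) * real N)\<^sup>2)
      + (3 / real N powr (- 15 / (16 * real k))) ^ k / real N"
proof -
  interpret prob_space "gauss_space N"
    by (rule prob_space_gauss_space)
  let ?b = "real N powr (-1/4) * real N" and ?u = "real N powr (- 15 / (16 * real k))"
  let ?G = "\<Union>(p, i)\<in>{1..k} \<times> {1..k}. gram_deviation_event N ?b p i"
  have N: "1 \<le> real N"
    using assms by simp
  have "measure (gauss_space N) ?G
      \<le> (\<Sum>x\<in>{1..k} \<times> {1..k}. measure (gauss_space N) (case x of (p, i) \<Rightarrow> gram_deviation_event N ?b p i))"
    using assms by (intro finite_measure_subadditive_finite) (auto intro: gram_deviation_event_sets)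
  also have "\<dots> \<le> (\<Sum>x\<in>{1..k} \<times> {1..k}. 3 * real N / ?b\<^sup>2)"
    using assms N by (intro sum_mono) (auto intro!: measure_gram_deviation_event)
  also have "\<dots> = (real k)\<^sup>2 * (3 * real N / ?b\<^sup>2)"
    by (simp add: power2_eq_square)
  finally have "measure (gauss_space N) ?G \<le> (real k)\<^sup>2 * (3 * real N / ?b\<^sup>2)" .
  moreover have "measure (gauss_space N) (no_small_column_event N k ?u) \<le> (3 / ?u) ^ k / real N"
    using assms N powr_mono[of "- 15 / (16 * real k)" 0 "real N"] by (intro measure_no_small_column_event) auto
  moreover have "measure (gauss_space N) (bad_event k N)
      \<le> measure (gauss_space N) ?G + measure (gauss_space N) (no_small_column_event N k ?u)"
    unfolding bad_event_def using assms
    by (intro measure_Un_le sets.finite_UN no_small_column_event_sets) (auto intro: gram_deviation_event_sets)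
  ultimately show ?thesis
    by linarith
qed

lemma scaled_Min_deviation_off_bad_event:
  fixes a :: "nat \<Rightarrow> real"
  assumes a: "\<And>i. i \<in> {1..k} \<Longrightarrow> 0 \<le> a i" and "1 \<le> k" "k \<le> N"
    and small: "2 ^ k * real N powr (-1/4) \<le> 1 / 2"
    and \<omega>: "\<omega> \<in> space (gauss_space N) - bad_event k N"
  shows "\<bar>real N powr (2 / real k) *
      ((MIN j\<in>{1..N}. \<Sum>i=1..k. a i * (sqrt (real N) * gsn N (yvec \<omega>) i j)\<^sup>2)
      - (MIN j\<in>{1..N}. \<Sum>i=1..k. a i * (gs N (yvec \<omega>) i j)\<^sup>2))\<bar>
    \<le> real N powr (2 / real k) * (8 ^ k * (\<Sum>i=1..k. a i) * real N powr (-1/4)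
      * (real N powr (- 15 / (16 * real k)))\<^sup>2)"
proof -
  let ?\<eta> = "real N powr (-1/4)"
  have "\<bar>ipN N (yvec \<omega> p) (yvec \<omega> i) - (if p = i then real N else 0)\<bar> \<le> ?\<eta> * N"
    if "p \<in> {1..k}" "i \<in> {1..k}" for p i
  proof -
    have "\<omega> \<notin> gram_deviation_event N (?\<eta> * N) p i"
      using \<omega> that by (auto simp: bad_event_def)
    then show ?thesis
      using \<omega> by (simp add: gram_deviation_event_def)
  qed
  then interpret near_orthonormal N k ?\<eta> "yvec \<omega>"
    using assms by unfold_locales auto
  have "\<exists>l\<in>{1..N}. \<forall>p\<in>{1..k}. \<bar>yvec \<omega> p l\<bar> \<le> real N powr (- 15 / (16 * real k))"
    using \<omega> by (simp add: bad_event_def no_small_column_event_def yvec_def not_less)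
  then obtain l where l: "l \<in> {1..N}"
    and small: "\<forall>p\<in>{1..k}. \<bar>yvec \<omega> p l\<bar> \<le> real N powr (- 15 / (16 * real k))" ..
  show ?thesis
    using weighted_Min_close[OF a l small[rule_format]] unfolding abs_mult abs_of_nonneg[OF powr_ge_zero]
    by (rule mult_left_mono) auto
qed

lemma tendsto_measure_bad_event:
  assumes "1 \<le> k"
  shows "(\<lambda>N. measure (gauss_space N) (bad_event k N)) \<longlonglongrightarrow> 0"
proof (rule tendsto_sandwich[OF _ _ tendsto_const])
  show "eventually (\<lambda>N. measure (gauss_space N) (bad_event k N)
    \<le> (real k)\<^sup>2 * (3 * real N / (real N powr (-1/4) * real N)\<^sup>2)
      + (3 / real N powr (- 15 / (16 * real k))) ^ k / real N) sequentially"
    using eventually_ge_at_top[of k] by (rule eventually_mono) (rule measure_bad_event_le[OF assms])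
  have eq: "3 ^ k * (real N powr (15 / 16) / real N) = (3 / real N powr (- 15 / (16 * real k))) ^ k / real N"
    if "0 < N" for N
  proof -
    have "(real N powr (- 15 / (16 * real k))) ^ k = real N powr (- 15 / 16)"
      using that assms by (simp add: powr_power)
    then show ?thesis
      by (simp add: power_divide powr_minus_divide)
  qed
  have "eventually (\<lambda>N. 3 ^ k * (real N powr (15 / 16) / real N)
      = (3 / real N powr (- 15 / (16 * real k))) ^ k / real N) sequentially"
    using eventually_gt_at_top[of "0::nat"] by (rule eventually_mono) (rule eq)
  moreover have "(\<lambda>N. 3 ^ k * (real N powr (15 / 16) / real N)) \<longlonglongrightarrow> 0"
    by (intro tendsto_mult_right_zero) real_asymp
  ultimately have "(\<lambda>N. (3 / real N powr (- 15 / (16 * real k))) ^ k / real N) \<longlonglongrightarrow> 0"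
    by (rule Lim_transform_eventually[rotated])
  moreover have "(\<lambda>N. (real k)\<^sup>2 * (3 * real N / (real N powr (-1/4) * real N)\<^sup>2)) \<longlonglongrightarrow> 0"
    by (intro tendsto_mult_right_zero) real_asymp
  ultimately show "(\<lambda>N. (real k)\<^sup>2 * (3 * real N / (real N powr (-1/4) * real N)\<^sup>2)
      + (3 / real N powr (- 15 / (16 * real k))) ^ k / real N) \<longlonglongrightarrow> 0"
    using tendsto_add by force
qed simp

lemma tendsto_deviation_rate:
  assumes "1 \<le> k"
  shows "(\<lambda>N. real N powr (2 / real k) * (C * real N powr (-1/4) * (real N powr (- 15 / (16 * real k)))\<^sup>2))
    \<longlonglongrightarrow> 0"
proof -
  have "real N powr (2 / real k) * (C * real N powr (-1/4) * (real N powr (- 15 / (16 * real k)))\<^sup>2)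
      = C * real N powr (1 / (8 * real k) - 1 / 4)" for N
  proof (cases "N = 0")
    case False
    have "2 / real k + (-1/4) + 2 * (- 15 / (16 * real k)) = 1 / (8 * real k) - 1 / 4"
      using assms by (simp add: field_simps)
    then show ?thesis
      using False by (simp add: powr_power mult_ac flip: powr_add)
  qed simp
  moreover have "(\<lambda>N. C * real N powr (1 / (8 * real k) - 1 / 4)) \<longlonglongrightarrow> 0"
    using assms
    by (intro tendsto_mult_right_zero tendsto_neg_powr filterlim_real_sequentially) (simp add: field_simps)
  ultimately show ?thesis
    by (simp only:)
qed

lemma eventually_k_le_and_eta_small:
  "eventually (\<lambda>N. k \<le> N \<and> 2 ^ k * real N powr (-1/4) \<le> 1 / 2) sequentially"
proof -
  have "eventually (\<lambda>N. real N powr (-1/4) < 1 / 2 ^ (k + 1)) sequentially"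
    by (intro order_tendstoD(2)[OF tendsto_neg_powr] filterlim_real_sequentially) auto
  with eventually_ge_at_top[of k] show ?thesis
    by eventually_elim (simp add: field_simps)
qed

theorem lemma3p12:
  fixes k :: nat and a :: "nat \<Rightarrow> real"
  assumes "k \<ge> 1"
    and "\<And>i. i \<in> {1..k} \<Longrightarrow> a i > 0"
  shows "\<forall>\<epsilon>>0. (\<lambda>N. measure (gauss_space N)
     {\<omega> \<in> space (gauss_space N).
        \<bar>real N powr (2 / real k) *
          ((MIN j\<in>{1..N}. \<Sum>i=1..k. a i * (sqrt (real N) * gsn N (yvec \<omega>) i j)\<^sup>2)
         - (MIN j\<in>{1..N}. \<Sum>i=1..k. a i * (gs N (yvec \<omega>) i j)\<^sup>2))\<bar> > \<epsilon>})
     \<longlonglongrightarrow> 0"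
proof -
  have a: "\<And>i. i \<in> {1..k} \<Longrightarrow> 0 \<le> a i"
    using assms(2) by (simp add: less_imp_le)
  show ?thesis
    by (rule tendsto_measure_exceeds_0[OF prob_space_gauss_space tendsto_measure_bad_event[OF assms(1)]
          tendsto_deviation_rate[OF assms(1), of "8 ^ k * (\<Sum>i=1..k. a i)"]
          eventually_mono[OF eventually_k_le_and_eta_small]])
       (use a assms(1) in \<open>elim conjE, intro conjI ballI bad_event_sets scaled_Min_deviation_off_bad_event\<close>)
qed

end
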